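(* The worst-case total storage cost of the SODA algorithm described in the context is $\frac{n}{n-f}$.
   Context: System model: asynchronous message passing with writers $\mathcal{W}$, readers $\mathcal{R}$ and $n$ servers $\mathcal{S}$ ordered $s_1<\dots<s_n$; reliable point-to-point channels between every client and server and every two servers; crash failures only; any number of clients and at most $f$ servers crash, $1\le f\le (n-1)/2$; executions are well-formed (each client invokes an operation only after its previous one completed). Coding: values of size 1 unit; an $[n,k]$ MDS code with $k=n-f$, encoder $\Phi$ producing $n$ coded elements $\Phi_s(v)$, $s\in\mathcal{S}$, each of size $1/k$; $v$ can be decoded from any $k$ of them. Tags $t=(z,w)$ ($z\in\mathbb{N}$, $w$ a writer id) ordered lexicographically; initial tag $t_0$. In SODA, each server $s$ stores exactly one (tag, coded element) pair $(t,c_s)$ in stable storage, initially $(t_0,\Phi_s(v_0))$, and replaces it with $(t_w,c'_s)$ whenever it delivers, via the write dissemination primitive, a coded element $c'_s=\Phi_s(v)$ with tag $t_w>t$; its other state ($R_c$, a set of registered (reader, tag) pairs, and $H$, a set of (tag, server, reader) triples) consists of metadata only. (Writes: query tags from a majority, choose a new higher tag, disseminate the value so each server obtains its coded element, wait for $k$ acknowledgments. Reads: query tags from a majority, register with servers, which send their stored and subsequently delivered coded elements with tag at least the read's tag, until $k$ elements with a common tag are received and decoded.) Total storage cost: the maximum, over all points of any execution, of the total size of data stored across all servers, normalized by the value size; metadata (tags, ids) and temporary variables are ignored. *)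

theory Defs
  imports Complex_Main "HOL-Library.Product_Lexorder"
begin

(* Tags t = (z, w): z a natural number, w a writer id; ordered lexicographically
   (linorder instance on pairs from Product_Lexorder). *)
type_synonym 'w tag = "nat \<times> 'w"

(* Stable-storage-relevant configuration of the SODA servers:
   - for each server s the unique stored (tag, coded element) pair,
   - the set of crashed servers.
   Metadata (R_c, H) and client / temporary state are not tracked since
   they do not count towards storage cost. *)
type_synonym ('s, 'w, 'c) config = "('s \<Rightarrow> 'w tag \<times> 'c) \<times> 's set"

datatype ('s, 'w, 'v) event =
    Deliver 's "'w tag" 'v   (* s delivers, via write dissemination, the coded element
                                Phi_s(v) of a value v written with tag t_w *)
  | Crash 's
  | Meta 's                  (* any other step (tag queries, read registrations, sending
                                coded elements to readers, acks) - metadata only *)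

definition mds :: "'s set \<Rightarrow> nat \<Rightarrow> ('s \<Rightarrow> 'v \<Rightarrow> 'c) \<Rightarrow> bool" where
  "mds S k Phi \<longleftrightarrow>
     (\<forall>T \<subseteq> S. card T = k \<longrightarrow> (\<forall>v w. (\<forall>s\<in>T. Phi s v = Phi s w) \<longrightarrow> v = w))"

inductive soda_step ::
  "'s set \<Rightarrow> nat \<Rightarrow> ('s \<Rightarrow> 'v \<Rightarrow> 'c) \<Rightarrow>
   ('s, 'w::linorder, 'c) config \<Rightarrow> ('s, 'w, 'v) event \<Rightarrow> ('s, 'w, 'c) config \<Rightarrow> bool"
  for S f Phi where
  deliver_new: "\<lbrakk> s \<in> S; s \<notin> cr; tw > fst (st s) \<rbrakk> \<Longrightarrow>
     soda_step S f Phi (st, cr) (Deliver s tw v) (st(s := (tw, Phi s v)), cr)"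
| deliver_old: "\<lbrakk> s \<in> S; s \<notin> cr; \<not> tw > fst (st s) \<rbrakk> \<Longrightarrow>
     soda_step S f Phi (st, cr) (Deliver s tw v) (st, cr)"
| crash: "\<lbrakk> s \<in> S; s \<notin> cr; card cr < f \<rbrakk> \<Longrightarrow>
     soda_step S f Phi (st, cr) (Crash s) (st, insert s cr)"
| meta: "\<lbrakk> s \<in> S; s \<notin> cr \<rbrakk> \<Longrightarrow>
     soda_step S f Phi (st, cr) (Meta s) (st, cr)"

definition soda_init :: "('s \<Rightarrow> 'v \<Rightarrow> 'c) \<Rightarrow> 'w tag \<Rightarrow> 'v \<Rightarrow> ('s, 'w, 'c) config" where
  "soda_init Phi t0 v0 = ((\<lambda>s. (t0, Phi s v0)), {})"

definition soda_reachable ::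
  "'s set \<Rightarrow> nat \<Rightarrow> ('s \<Rightarrow> 'v \<Rightarrow> 'c) \<Rightarrow> 'w::linorder tag \<Rightarrow> 'v \<Rightarrow> ('s, 'w, 'c) config \<Rightarrow> bool" where
  "soda_reachable S f Phi t0 v0 =
     (\<lambda>C. (\<lambda>a b. \<exists>e. soda_step S f Phi a e b)\<^sup>*\<^sup>* (soda_init Phi t0 v0) C)"

(* Total size of data stored across all servers at a configuration, normalized by the
   value size (= 1 unit); csize gives the size of a coded element. *)
definition total_storage :: "'s set \<Rightarrow> ('c \<Rightarrow> real) \<Rightarrow> ('s, 'w, 'c) config \<Rightarrow> real" where
  "total_storage S csize C = (\<Sum>s\<in>S. csize (snd (fst C s))) / 1"

definition soda_storage_cost ::
  "'s set \<Rightarrow> nat \<Rightarrow> ('s \<Rightarrow> 'v \<Rightarrow> 'c) \<Rightarrow> ('c \<Rightarrow> real) \<Rightarrow> 'w::linorder tag \<Rightarrow> 'v \<Rightarrow> real" where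
  "soda_storage_cost S f Phi csize t0 v0 =
     Sup (total_storage S csize ` {C. soda_reachable S f Phi t0 v0 C})"

end

(* Every server always stores exactly one coded element Phi_s(v) of some value v, whether it
   keeps the initial one or replaces it upon delivery; crashes and metadata steps do not touch
   stable storage. So at every point of every execution the n servers hold n elements of size
   1/k each, and the total storage is n/k = n/(n - f), attained already at the initial point. *)
theory Submission
  imports Defs
begin

lemma soda_reachable_stores_coded_element:
  assumes "soda_reachable S f Phi t0 v0 C" and "s \<in> S"
  shows "\<exists>v. snd (fst C s) = Phi s v"
  using assms unfolding soda_reachable_def
proof (induction rule: rtranclp_induct)
  case base
  then show ?case by (auto simp: soda_init_def)
next
  case (step y z)
  then obtain e where "soda_step S f Phi y e z" by blast
  then show ?case using step by (cases rule: soda_step.cases) auto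
qed

lemma soda_reachable_init: "soda_reachable S f Phi t0 v0 (soda_init Phi t0 v0)"
  by (simp add: soda_reachable_def)

lemma total_storage_const:
  assumes "\<And>s. s \<in> S \<Longrightarrow> csize (snd (fst C s)) = c"
  shows "total_storage S csize C = real (card S) * c"
proof -
  have "(\<Sum>s\<in>S. csize (snd (fst C s))) = (\<Sum>s\<in>S. c)"
    using assms by (rule sum.cong[OF refl])
  then show ?thesis by (simp add: total_storage_def)
qed

lemma soda_storage_cost_const:
  assumes "\<And>C. soda_reachable S f Phi t0 v0 C \<Longrightarrow> total_storage S csize C = x"
  shows "soda_storage_cost S f Phi csize t0 v0 = x"
proof -
  let ?R = "{C. soda_reachable S f Phi t0 v0 C}"
  have "total_storage S csize ` ?R = (\<lambda>_. x) ` ?R"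
    using assms by (intro image_cong) auto
  also have "\<dots> = {x}"
    by (rule image_constant[where x = "soda_init Phi t0 v0"]) (simp add: soda_reachable_init)
  finally show ?thesis by (simp add: soda_storage_cost_def)
qed

theorem theorem5:
  fixes S :: "'s set" and n f k :: nat
    and Phi :: "'s \<Rightarrow> 'v \<Rightarrow> 'c" and csize :: "'c \<Rightarrow> real"
    and t0 :: "'w::linorder tag" and v0 :: 'v
  assumes "finite S" and "card S = n"
    and "1 \<le> f" and "2 * f \<le> n - 1"
    and "k = n - f"
    and "mds S k Phi"
    and "\<And>s v. s \<in> S \<Longrightarrow> csize (Phi s v) = 1 / real k"
  shows "soda_storage_cost S f Phi csize t0 v0 = real n / real (n - f)"
proof (rule soda_storage_cost_const)
  fix C
  assume reach: "soda_reachable S f Phi t0 v0 C"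
  have "csize (snd (fst C s)) = 1 / real k" if "s \<in> S" for s
    using soda_reachable_stores_coded_element[OF reach that] assms(7)[OF that] by auto
  then have "total_storage S csize C = real n * (1 / real k)"
    using assms(2) by (simp add: total_storage_const)
  then show "total_storage S csize C = real n / real (n - f)"
    using assms(5) by simp
qed

end
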